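(* Let $\widetilde\nabla$ be the canonical snm-connection on $\mathbb R^3$ determined by $\mathsf C=\partial_z$. Let $c\in\mathbb R\setminus\{0,\tfrac12\}$ and let $$u(x,y)=-\frac1c\log\cos(cx)-\frac{2c-1}{c}\log\cos\Big(\frac{cy}{2c-1}\Big)$$ on a connected open set $\Omega\subset\mathbb R^2$ on which $\cos(cx)>0$ and $\cos\big(cy/(2c-1)\big)>0$. Then the graph $M=\{(x,y,u(x,y)):(x,y)\in\Omega\}$ satisfies $K(p)=\widetilde K(T_pM)$ at every point $p\in M$ (equivalently, $G=\langle \partial_z,N\rangle H$ on $M$, where $N$ is the upward unit normal).
   Context: Let $\langle\cdot,\cdot\rangle$ be the Euclidean metric on $\mathbb R^3$ and $\widetilde\nabla^0$ its Levi-Civita connection (the ordinary directional derivative). Given a smooth vector field $\mathsf C$ on $\mathbb R^3$, the semi-symmetric non-metric connection (snm-connection) determined by $\mathsf C$ is $\widetilde\nabla_XY=\widetilde\nabla^0_XY+\langle \mathsf C,Y\rangle X$. Its curvature tensor is $\widetilde R(X,Y)Z=\widetilde\nabla_X\widetilde\nabla_YZ-\widetilde\nabla_Y\widetilde\nabla_XZ-\widetilde\nabla_{[X,Y]}Z$. For a $2$-dimensional subspace $\pi\subset T_p\mathbb R^3$ with orthonormal basis $\{e_1,e_2\}$, its sectional curvature with respect to $\widetilde\nabla$ is $\widetilde K(\pi)=\frac12\big(\langle\widetilde R(e_1,e_2)e_2,e_1\rangle+\langle\widetilde R(e_2,e_1)e_1,e_2\rangle\big)$. For a surface $M$ immersed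 in $\mathbb R^3$, the induced connection is $\nabla_XY=(\widetilde\nabla_XY)^{\top}$ for tangent vector fields $X,Y$, with curvature tensor $R$ defined by the same formula as $\widetilde R$, and the sectional curvature of $M$ with respect to $\widetilde\nabla$ at $p$ is $K(p)=\frac12\big(\langle R(e_1,e_2)e_2,e_1\rangle+\langle R(e_2,e_1)e_1,e_2\rangle\big)$ for an orthonormal basis $\{e_1,e_2\}$ of $T_pM$. $G$ and $H$ denote the Gaussian and mean curvature (one half the trace of the shape operator for the second fundamental form $h(X,Y)=\langle\widetilde\nabla^0_XY,N\rangle$). *)

theory Defs
  imports "HOL-Analysis.Analysis" "HOL-Analysis.Cross3"
begin

definition partial_dir :: "(real^2 \<Rightarrow> real^3) \<Rightarrow> real^2 \<Rightarrow> (real^2 \<Rightarrow> real^3)" where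
  "partial_dir V w = (\<lambda>q. frechet_derivative V (at q) w)"

fun iter_partial :: "(real^2 \<Rightarrow> real^3) \<Rightarrow> (real^2) list \<Rightarrow> (real^2 \<Rightarrow> real^3)" where
  "iter_partial V [] = V"
| "iter_partial V (w # ws) = partial_dir (iter_partial V ws) w"

definition smooth_field_on :: "(real^2) set \<Rightarrow> (real^2 \<Rightarrow> real^3) \<Rightarrow> bool" where
  "smooth_field_on S V \<longleftrightarrow> (\<forall>ws. iter_partial V ws differentiable_on S)"

(* Vector fields along M are represented as functions V : real^2 \<Rightarrow> real^3,
   V q being the vector at the point graph_map u q. *)
definition graph_map :: "(real^2 \<Rightarrow> real) \<Rightarrow> real^2 \<Rightarrow> real^3" where
  "graph_map u q = vector [q$1, q$2, u q]"

(* projection R^3 \<rightarrow> R^2 onto the (x,y) coordinates: the inverse of graph_map on M *)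
definition proj12 :: "real^3 \<Rightarrow> real^2" where
  "proj12 v = vector [v$1, v$2]"

definition unit_normal :: "(real^2 \<Rightarrow> real) \<Rightarrow> real^2 \<Rightarrow> real^3" where
  "unit_normal u q =
     (let n = cross3 (frechet_derivative (graph_map u) (at q) (axis 1 1))
                     (frechet_derivative (graph_map u) (at q) (axis 2 1))
      in (1 / norm n) *\<^sub>R n)"

definition tangent_proj :: "(real^2 \<Rightarrow> real) \<Rightarrow> real^2 \<Rightarrow> real^3 \<Rightarrow> real^3" where
  "tangent_proj u q v = v - (v \<bullet> unit_normal u q) *\<^sub>R unit_normal u q"

definition tangent_field_on :: "(real^2 \<Rightarrow> real) \<Rightarrow> (real^2) set \<Rightarrow> (real^2 \<Rightarrow> real^3) \<Rightarrow> bool" where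
  "tangent_field_on u S X \<longleftrightarrow> (\<forall>q\<in>S. X q \<bullet> unit_normal u q = 0)"

(* Levi-Civita (flat) derivative \<nabla>^0_X V along M, for X tangent to M:
   derivative of V \<circ> proj12 in direction X *)
definition flatD :: "(real^2 \<Rightarrow> real^3) \<Rightarrow> (real^2 \<Rightarrow> real^3) \<Rightarrow> real^2 \<Rightarrow> real^3" where
  "flatD X V q = frechet_derivative V (at q) (proj12 (X q))"

definition Cz :: "real^3" where
  "Cz = axis 3 1"

definition snm_nabla :: "(real^2 \<Rightarrow> real^3) \<Rightarrow> (real^2 \<Rightarrow> real^3) \<Rightarrow> real^2 \<Rightarrow> real^3" where
  "snm_nabla X Y q = flatD X Y q + (Cz \<bullet> Y q) *\<^sub>R X q"

definition ind_nabla :: "(real^2 \<Rightarrow> real) \<Rightarrow> (real^2 \<Rightarrow> real^3) \<Rightarrow> (real^2 \<Rightarrow> real^3) \<Rightarrow> real^2 \<Rightarrow> real^3" where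
  "ind_nabla u X Y q = tangent_proj u q (snm_nabla X Y q)"

definition lie_bracket :: "(real^2 \<Rightarrow> real^3) \<Rightarrow> (real^2 \<Rightarrow> real^3) \<Rightarrow> real^2 \<Rightarrow> real^3" where
  "lie_bracket X Y q = flatD X Y q - flatD Y X q"

definition snm_curv :: "(real^2 \<Rightarrow> real^3) \<Rightarrow> (real^2 \<Rightarrow> real^3) \<Rightarrow> (real^2 \<Rightarrow> real^3) \<Rightarrow> real^2 \<Rightarrow> real^3" where
  "snm_curv X Y Z q = snm_nabla X (snm_nabla Y Z) q - snm_nabla Y (snm_nabla X Z) q
                      - snm_nabla (lie_bracket X Y) Z q"

definition ind_curv :: "(real^2 \<Rightarrow> real) \<Rightarrow> (real^2 \<Rightarrow> real^3) \<Rightarrow> (real^2 \<Rightarrow> real^3) \<Rightarrow> (real^2 \<Rightarrow> real^3) \<Rightarrow> real^2 \<Rightarrow> real^3" where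
  "ind_curv u X Y Z q = ind_nabla u X (ind_nabla u Y Z) q - ind_nabla u Y (ind_nabla u X Z) q
                        - ind_nabla u (lie_bracket X Y) Z q"

(* sectional curvature of T_pM w.r.t. \<nabla>~ (computed with fields E1,E2 orthonormal at q) *)
definition snm_sec :: "(real^2 \<Rightarrow> real^3) \<Rightarrow> (real^2 \<Rightarrow> real^3) \<Rightarrow> real^2 \<Rightarrow> real" where
  "snm_sec E1 E2 q = (snm_curv E1 E2 E2 q \<bullet> E1 q + snm_curv E2 E1 E1 q \<bullet> E2 q) / 2"

definition ind_sec :: "(real^2 \<Rightarrow> real) \<Rightarrow> (real^2 \<Rightarrow> real^3) \<Rightarrow> (real^2 \<Rightarrow> real^3) \<Rightarrow> real^2 \<Rightarrow> real" where
  "ind_sec u E1 E2 q = (ind_curv u E1 E2 E2 q \<bullet> E1 q + ind_curv u E2 E1 E1 q \<bullet> E2 q) / 2"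

end

theory Submission
  imports Defs
begin

(* For orthonormal tangent fields, differentiating the tangential projection gives a Gauss
   equation for the snm-connection, K = K~ + G - <C,N> H, with G and H computed from the second
   fundamental form h(a,b) = -<dN(a), b>. On the graph of u one has <C,N> = W^(-1/2) and
   h = Hess u / W^(1/2), where W = 1 + |grad u|^2. Here u_xy = 0, u_xx = c (1 + u_x^2) and
   u_yy = k (1 + u_y^2) with k = c/(2c-1), so that 2ck = c + k; this is exactly the identity
   2 u_xx u_yy = (1 + u_y^2) u_xx + (1 + u_x^2) u_yy, the coordinate form of G = <C,N> H. *)

lemma has_derivative_vec_nth: "((\<lambda>x::real^'n. x$i) has_derivative (\<lambda>v. v$i)) F"
  by (rule bounded_linear_imp_has_derivative[OF bounded_linear_vec_nth])

lemma vector_3_eq_axis: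
  "(vector [a, b, c] :: real^3) = a *\<^sub>R axis 1 1 + b *\<^sub>R axis 2 1 + c *\<^sub>R axis 3 1"
  by (simp add: vec_eq_iff forall_3 axis_def)

lemma inner_real3: "x \<bullet> y = x$1 * y$1 + x$2 * y$2 + x$3 * y$3" for x y :: "real^3"
  by (simp add: inner_vec_def sum_3)

lemma smooth_field_on_differentiable:
  assumes "smooth_field_on \<Omega> Y" "open \<Omega>" "q \<in> \<Omega>"
  shows "Y differentiable at q" and "partial_dir Y w differentiable at q"
proof -
  have "iter_partial Y [] differentiable_on \<Omega>" "iter_partial Y [w] differentiable_on \<Omega>"
    using assms(1) unfolding smooth_field_on_def by blast+
  then show "Y differentiable at q" "partial_dir Y w differentiable at q"
    using assms(2,3) by (auto simp: differentiable_on_eq_differentiable_at)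
qed

lemma flatD_eq_partial_dir:
  assumes "Y differentiable at q"
  shows "flatD X Y q = X q$1 *\<^sub>R partial_dir Y (axis 1 1) q + X q$2 *\<^sub>R partial_dir Y (axis 2 1) q"
proof -
  have "proj12 (X q) = X q$1 *\<^sub>R axis 1 1 + X q$2 *\<^sub>R axis 2 1"
    by (simp add: proj12_def vec_eq_iff forall_2 axis_def)
  then show ?thesis
    using linear_frechet_derivative[OF assms]
    by (simp add: flatD_def partial_dir_def linear_add linear_scale)
qed

lemma snm_nabla_differentiable:
  assumes X: "smooth_field_on \<Omega> X" and Y: "smooth_field_on \<Omega> Y"
    and "open \<Omega>" and "q \<in> \<Omega>"
  shows "snm_nabla X Y differentiable at q"
proof -
  define G where "G p = X p$1 *\<^sub>R partial_dir Y (axis 1 1) p + X p$2 *\<^sub>R partial_dir Y (axis 2 1) p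
    + (Cz \<bullet> Y p) *\<^sub>R X p" for p
  have XY: "X differentiable at q" "Y differentiable at q" "partial_dir Y w differentiable at q" for w
    using smooth_field_on_differentiable[OF X \<open>open \<Omega>\<close> \<open>q \<in> \<Omega>\<close>]
      smooth_field_on_differentiable[OF Y \<open>open \<Omega>\<close> \<open>q \<in> \<Omega>\<close>] by blast+
  have "(\<lambda>p. X p $ i) differentiable at q" for i
    using XY(1) unfolding differentiable_def by (blast intro: has_derivative_compose[OF _ has_derivative_vec_nth])
  then have "G differentiable at q"
    unfolding G_def
    by (intro differentiable_add differentiable_scaleR differentiable_inner XY differentiable_const)
  then obtain D where "(G has_derivative D) (at q)"
    by (auto simp: differentiable_def)
  moreover have "G p = snm_nabla X Y p" if "p \<in> \<Omega>" for p
    using flatD_eq_partial_dir[OF smooth_field_on_differentiable(1)[OF Y \<open>open \<Omega>\<close> that]]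
    by (simp add: G_def snm_nabla_def)
  ultimately show ?thesis
    using has_derivative_transform_within_open[OF _ \<open>open \<Omega>\<close> \<open>q \<in> \<Omega>\<close>]
    unfolding differentiable_def by blast
qed

lemma inner_unit_normal_derivative:
  assumes N: "(unit_normal u has_derivative DN) (at q)" and E: "E differentiable at q"
    and "open \<Omega>" and "q \<in> \<Omega>" and "tangent_field_on u \<Omega> E"
  shows "frechet_derivative E (at q) v \<bullet> unit_normal u q = - (E q \<bullet> DN v)"
proof -
  obtain DE where DE: "(E has_derivative DE) (at q)" using E by (auto simp: differentiable_def)
  have "((\<lambda>p. E p \<bullet> unit_normal u p) has_derivative (\<lambda>v. E q \<bullet> DN v + DE v \<bullet> unit_normal u q)) (at q)"
    by (rule has_derivative_inner[OF DE N])
  moreover have "((\<lambda>p. E p \<bullet> unit_normal u p) has_derivative (\<lambda>v. 0)) (at q)"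
    by (rule has_derivative_transform_within_open[OF has_derivative_const \<open>open \<Omega>\<close> \<open>q \<in> \<Omega>\<close>])
      (use \<open>tangent_field_on u \<Omega> E\<close> in \<open>simp add: tangent_field_on_def\<close>)
  ultimately have "(\<lambda>v. E q \<bullet> DN v + DE v \<bullet> unit_normal u q) = (\<lambda>v. 0)"
    by (rule has_derivative_unique)
  then show ?thesis
    using frechet_derivative_at[OF DE] by (simp add: fun_eq_iff add_eq_0_iff)
qed

lemma inner_tangent_proj:
  "w \<bullet> unit_normal u q = 0 \<Longrightarrow> tangent_proj u q v \<bullet> w = v \<bullet> w"
  by (simp add: tangent_proj_def inner_diff_left inner_commute[of "unit_normal u q"])

lemma frechet_derivative_tangent_proj_inner:
  assumes N: "(unit_normal u has_derivative DN) (at q)" and F: "F differentiable at q"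
    and e: "e \<bullet> unit_normal u q = 0"
  shows "frechet_derivative (\<lambda>p. tangent_proj u p (F p)) (at q) v \<bullet> e
         = frechet_derivative F (at q) v \<bullet> e - (F q \<bullet> unit_normal u q) * (DN v \<bullet> e)"
proof -
  obtain DF where DF: "(F has_derivative DF) (at q)" using F by (auto simp: differentiable_def)
  have "((\<lambda>p. tangent_proj u p (F p)) has_derivative
     (\<lambda>v. DF v - ((F q \<bullet> unit_normal u q) *\<^sub>R DN v
        + (F q \<bullet> DN v + DF v \<bullet> unit_normal u q) *\<^sub>R unit_normal u q))) (at q)"
    unfolding tangent_proj_def
    by (intro has_derivative_diff DF has_derivative_scaleR has_derivative_inner N)
  then show ?thesis
    by (simp add: frechet_derivative_at[symmetric] frechet_derivative_at[OF DF, symmetric]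
        inner_diff_left inner_add_left e inner_commute[of "unit_normal u q" e])
qed

lemma inner_ind_curv_snm_curv:
  assumes N: "(unit_normal u has_derivative DN) (at q)"
    and YY: "snm_nabla Y Y differentiable at q" and XY: "snm_nabla X Y differentiable at q"
    and X: "X q \<bullet> unit_normal u q = 0"
  shows "ind_curv u X Y Y q \<bullet> X q = snm_curv X Y Y q \<bullet> X q
     - (snm_nabla Y Y q \<bullet> unit_normal u q)
         * (DN (proj12 (X q)) \<bullet> X q + (Cz \<bullet> unit_normal u q) * (X q \<bullet> X q))
     + (snm_nabla X Y q \<bullet> unit_normal u q)
         * (DN (proj12 (Y q)) \<bullet> X q + (Cz \<bullet> unit_normal u q) * (Y q \<bullet> X q))"
proof -
  have ind: "ind_nabla u Z V = (\<lambda>p. tangent_proj u p (snm_nabla Z V p))" for Z V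
    by (simp add: fun_eq_iff ind_nabla_def)
  have outer: "ind_nabla u Z V' q \<bullet> X q = flatD Z V' q \<bullet> X q + (Cz \<bullet> V' q) * (Z q \<bullet> X q)"
    "snm_nabla Z V' q \<bullet> X q = flatD Z V' q \<bullet> X q + (Cz \<bullet> V' q) * (Z q \<bullet> X q)" for Z V'
    by (simp_all add: ind_nabla_def inner_tangent_proj[OF X] snm_nabla_def inner_add_left)
  have Cz_ind: "Cz \<bullet> ind_nabla u Z V q
      = Cz \<bullet> snm_nabla Z V q - (snm_nabla Z V q \<bullet> unit_normal u q) * (Cz \<bullet> unit_normal u q)" for Z V
    by (simp add: ind_nabla_def tangent_proj_def inner_diff_right)
  have bracket: "ind_nabla u (lie_bracket X Y) Y q \<bullet> X q = snm_nabla (lie_bracket X Y) Y q \<bullet> X q"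
    by (simp add: ind_nabla_def inner_tangent_proj[OF X])
  show ?thesis
    unfolding ind_curv_def snm_curv_def inner_diff_left outer bracket Cz_ind
    using frechet_derivative_tangent_proj_inner[OF N YY X] frechet_derivative_tangent_proj_inner[OF N XY X]
    by (simp add: flatD_def ind algebra_simps)
qed

text \<open>The second fundamental form, via the Weingarten formula \<open>h(a,b) = -\<langle>dN(a), b\<rangle>\<close>
  for tangent \<open>b\<close>; \<open>proj12\<close> turns the tangent vector \<open>a\<close> into a parameter direction.\<close>

definition second_form :: "(real^2 \<Rightarrow> real) \<Rightarrow> real^2 \<Rightarrow> real^3 \<Rightarrow> real^3 \<Rightarrow> real" where
  "second_form u q a b = - (frechet_derivative (unit_normal u) (at q) (proj12 a) \<bullet> b)"

lemma snm_nabla_inner_unit_normal: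
  assumes N: "unit_normal u differentiable at q" and "open \<Omega>" "q \<in> \<Omega>"
    and "smooth_field_on \<Omega> Y" "tangent_field_on u \<Omega> Y" and X: "X q \<bullet> unit_normal u q = 0"
  shows "snm_nabla X Y q \<bullet> unit_normal u q = second_form u q (X q) (Y q)"
  using inner_unit_normal_derivative[OF frechet_derivative_works[THEN iffD1, OF N]
      smooth_field_on_differentiable(1)[OF assms(4,2,3)] assms(2,3,5)]
  by (simp add: second_form_def snm_nabla_def flatD_def inner_add_left X inner_commute[of "Y q"])

lemma inner_ind_curv_gauss:
  assumes N: "unit_normal u differentiable at q" and op: "open \<Omega>" and q: "q \<in> \<Omega>"
    and SX: "smooth_field_on \<Omega> X" and SY: "smooth_field_on \<Omega> Y"
    and TX: "tangent_field_on u \<Omega> X" and TY: "tangent_field_on u \<Omega> Y"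
  defines "h \<equiv> second_form u q"
  shows "ind_curv u X Y Y q \<bullet> X q = snm_curv X Y Y q \<bullet> X q
     + h (X q) (X q) * h (Y q) (Y q) - h (X q) (Y q) * h (Y q) (X q)
     - (Cz \<bullet> unit_normal u q) * (h (Y q) (Y q) * (X q \<bullet> X q) - h (X q) (Y q) * (Y q \<bullet> X q))"
proof -
  have tangent: "X q \<bullet> unit_normal u q = 0" "Y q \<bullet> unit_normal u q = 0"
    using TX TY q by (auto simp: tangent_field_on_def)
  show ?thesis
    using inner_ind_curv_snm_curv[OF frechet_derivative_works[THEN iffD1, OF N]
        snm_nabla_differentiable[OF SY SY op q] snm_nabla_differentiable[OF SX SY op q] tangent(1)]
      snm_nabla_inner_unit_normal[where X = X, OF N op q SY TY tangent(1)]
      snm_nabla_inner_unit_normal[where X = Y, OF N op q SY TY tangent(2)]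
    by (simp add: h_def second_form_def algebra_simps)
qed

text \<open>In terms of the Gaussian and mean curvature this reads \<open>K = K~ + G - \<langle>C,N\<rangle> H\<close>.\<close>

lemma ind_sec_gauss_equation:
  assumes N: "unit_normal u differentiable at q" and op: "open \<Omega>" and q: "q \<in> \<Omega>"
    and S1: "smooth_field_on \<Omega> E1" and S2: "smooth_field_on \<Omega> E2"
    and T1: "tangent_field_on u \<Omega> E1" and T2: "tangent_field_on u \<Omega> E2"
    and "E1 q \<bullet> E1 q = 1" "E2 q \<bullet> E2 q = 1" "E1 q \<bullet> E2 q = 0"
  defines "h \<equiv> second_form u q"
  shows "ind_sec u E1 E2 q = snm_sec E1 E2 q
     + (h (E1 q) (E1 q) * h (E2 q) (E2 q) - h (E1 q) (E2 q) * h (E2 q) (E1 q))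
     - (Cz \<bullet> unit_normal u q) * (h (E1 q) (E1 q) + h (E2 q) (E2 q)) / 2"
  using inner_ind_curv_gauss[OF N op q S1 S2 T1 T2] inner_ind_curv_gauss[OF N op q S2 S1 T2 T1] assms(8-10)
  by (simp add: ind_sec_def snm_sec_def h_def inner_commute field_simps)

lemma graph_map_has_derivative:
  assumes "(u has_derivative (\<lambda>v. a * v$1 + b * v$2)) (at q)"
  shows "(graph_map u has_derivative
           (\<lambda>v. v$1 *\<^sub>R axis 1 1 + v$2 *\<^sub>R axis 2 1 + (a * v$1 + b * v$2) *\<^sub>R axis 3 1)) (at q)"
proof -
  have "graph_map u = (\<lambda>p. p$1 *\<^sub>R axis 1 1 + p$2 *\<^sub>R axis 2 1 + u p *\<^sub>R axis 3 1)"
    by (simp add: fun_eq_iff graph_map_def vector_3_eq_axis)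
  then show ?thesis
    using assms by (auto intro!: derivative_eq_intros has_derivative_vec_nth)
qed

lemma unit_normal_graph:
  assumes "(u has_derivative (\<lambda>v. a * v$1 + b * v$2)) (at q)"
  shows "unit_normal u q = (1 / sqrt (1 + a^2 + b^2)) *\<^sub>R vector [-a, -b, 1]"
proof -
  note D = frechet_derivative_at[OF graph_map_has_derivative[OF assms], symmetric]
  have "frechet_derivative (graph_map u) (at q) (axis 1 1) = vector [1, 0, a]"
    "frechet_derivative (graph_map u) (at q) (axis 2 1) = vector [0, 1, b]"
    by (simp_all add: D vec_eq_iff forall_3 axis_def)
  moreover have "cross3 (vector [1, 0, a]) (vector [0, 1, b]) = (vector [-a, -b, 1] :: real^3)"
    by (simp add: cross3_def)
  moreover have "norm (vector [-a, -b, 1] :: real^3) = sqrt (1 + a^2 + b^2)"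
    by (simp add: norm_eq_sqrt_inner inner_real3 power2_eq_square algebra_simps)
  ultimately show ?thesis
    by (simp add: unit_normal_def Let_def)
qed

lemma tangent_field_on_graph:
  assumes "tangent_field_on u \<Omega> E" "q \<in> \<Omega>" "(u has_derivative (\<lambda>v. a * v$1 + b * v$2)) (at q)"
  shows "E q \<bullet> vector [- a, - b, 1] = 0"
proof -
  have "E q \<bullet> unit_normal u q = 0"
    using assms(1,2) unfolding tangent_field_on_def by blast
  moreover have "0 < 1 + a^2 + b^2" by (simp add: add_pos_nonneg)
  ultimately show ?thesis by (simp add: unit_normal_graph[OF assms(3)])
qed

lemma second_form_graph:
  assumes "open \<Omega>" "q \<in> \<Omega>" and grad: "\<forall>x\<in>\<Omega>. (u has_derivative (\<lambda>v. p x * v$1 + r x * v$2)) (at x)"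
    and Dp: "(p has_derivative Dp) (at q)" and Dr: "(r has_derivative Dr) (at q)"
  shows "unit_normal u differentiable at q"
    and "b \<bullet> vector [- p q, - r q, 1] = 0 \<Longrightarrow>
      second_form u q a b = (Dp (proj12 a) * b$1 + Dr (proj12 a) * b$2) / sqrt (1 + (p q)^2 + (r q)^2)"
proof -
  define f where "f x = 1 / sqrt (1 + (p x)^2 + (r x)^2)" for x
  define m where "m x = (- p x) *\<^sub>R axis 1 1 + (- r x) *\<^sub>R axis 2 1 + (axis 3 1 :: real^3)" for x
  define Df where "Df v = - (p q * Dp v + r q * Dr v) / sqrt (1 + (p q)^2 + (r q)^2) ^ 3" for v
  have "0 < 1 + (p q)^2 + (r q)^2" by (simp add: add_pos_nonneg)
  then have Df: "(f has_derivative Df) (at q)"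
    unfolding f_def Df_def using Dp Dr
    apply (auto intro!: derivative_eq_intros simp: fun_eq_iff)
    by (simp add: power3_eq_cube divide_simps algebra_simps)
  have Dm: "(m has_derivative (\<lambda>v. (- Dp v) *\<^sub>R axis 1 1 + (- Dr v) *\<^sub>R axis 2 1)) (at q)"
    unfolding m_def using Dp Dr by (auto intro!: derivative_eq_intros)
  have normal: "unit_normal u x = f x *\<^sub>R m x" if "x \<in> \<Omega>" for x
    using unit_normal_graph[OF grad[rule_format, OF that]] by (simp add: f_def m_def vector_3_eq_axis)
  have DN: "(unit_normal u has_derivative
      (\<lambda>v. f q *\<^sub>R ((- Dp v) *\<^sub>R axis 1 1 + (- Dr v) *\<^sub>R axis 2 1) + Df v *\<^sub>R m q)) (at q)"
    using has_derivative_scaleR[OF Df Dm]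
    by (rule has_derivative_transform_within_open[OF _ \<open>open \<Omega>\<close> \<open>q \<in> \<Omega>\<close>]) (simp add: normal)
  then show "unit_normal u differentiable at q"
    unfolding differentiable_def by blast
  assume "b \<bullet> vector [- p q, - r q, 1] = 0"
  then have "b \<bullet> m q = 0" by (simp add: m_def vector_3_eq_axis)
  then show "second_form u q a b = (Dp (proj12 a) * b$1 + Dr (proj12 a) * b$2) / sqrt (1 + (p q)^2 + (r q)^2)"
    by (simp add: second_form_def frechet_derivative_at[OF DN, symmetric] inner_add_left
        inner_commute[of _ b] inner_axis f_def add_divide_distrib algebra_simps)
qed

lemma ind_sec_graph:
  assumes "open \<Omega>" and q: "q \<in> \<Omega>"
    and grad: "\<forall>x\<in>\<Omega>. (u has_derivative (\<lambda>v. p x * v$1 + r x * v$2)) (at x)"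
    and Dp: "(p has_derivative Dp) (at q)" and Dr: "(r has_derivative Dr) (at q)"
    and fields: "smooth_field_on \<Omega> E1" "smooth_field_on \<Omega> E2"
      "tangent_field_on u \<Omega> E1" "tangent_field_on u \<Omega> E2"
    and orthonormal: "E1 q \<bullet> E1 q = 1" "E2 q \<bullet> E2 q = 1" "E1 q \<bullet> E2 q = 0"
  defines "H \<equiv> \<lambda>a b. Dp (proj12 a) * b$1 + Dr (proj12 a) * b$2"
  shows "ind_sec u E1 E2 q = snm_sec E1 E2 q
    + (2 * (H (E1 q) (E1 q) * H (E2 q) (E2 q) - H (E1 q) (E2 q) * H (E2 q) (E1 q))
       - (H (E1 q) (E1 q) + H (E2 q) (E2 q))) / (2 * (1 + (p q)^2 + (r q)^2))"
proof -
  define s where "s = sqrt (1 + (p q)^2 + (r q)^2)"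
  have "s > 0" and s2: "s^2 = 1 + (p q)^2 + (r q)^2"
    by (simp_all add: s_def add_pos_nonneg)
  note second_form = second_form_graph[OF \<open>open \<Omega>\<close> q grad Dp Dr]
  have tangent: "E1 q \<bullet> vector [- p q, - r q, 1] = 0" "E2 q \<bullet> vector [- p q, - r q, 1] = 0"
    using tangent_field_on_graph[OF _ q grad[rule_format, OF q]] fields(3,4) by blast+
  have h: "second_form u q a b = H a b / s" if "b \<bullet> vector [- p q, - r q, 1] = 0" for a b
    using second_form(2)[OF that] by (simp add: H_def s_def)
  have Cz: "Cz \<bullet> unit_normal u q = 1 / s"
    using unit_normal_graph[OF grad[rule_format, OF q]] by (simp add: Cz_def s_def inner_real3 axis_def)
  show ?thesis
    unfolding ind_sec_gauss_equation[OF second_form(1) \<open>open \<Omega>\<close> q fields orthonormal]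
      Cz h[OF tangent(1)] h[OF tangent(2)] s2[symmetric]
    using \<open>s > 0\<close> by (simp add: field_simps power2_eq_square)
qed

text \<open>For the projections \<open>\<pi> e\<^sub>i\<close> of an orthonormal tangent frame to the \<open>xy\<close>-plane,
  \<open>\<Sum>\<^sub>i \<pi> e\<^sub>i (\<pi> e\<^sub>i)\<^sup>T\<close> is the inverse
  \<open>[[1 + g2\<^sup>2, -g1 g2], [-g1 g2, 1 + g1\<^sup>2]] / (1 + g1\<^sup>2 + g2\<^sup>2)\<close> of the first fundamental form.\<close>

lemma orthonormal_tangent_frame_graph:
  fixes e1 e2 :: "real^3"
  assumes "e1 \<bullet> e1 = 1" "e2 \<bullet> e2 = 1" "e1 \<bullet> e2 = 0"
    and "e1 \<bullet> vector [- g1, - g2, 1] = 0" "e2 \<bullet> vector [- g1, - g2, 1] = 0"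
  shows "(e1$1 * e2$2 - e1$2 * e2$1)^2 * (1 + g1^2 + g2^2) = 1"
    and "(e1$1^2 + e2$1^2) * (1 + g1^2 + g2^2) = 1 + g2^2"
    and "(e1$2^2 + e2$2^2) * (1 + g1^2 + g2^2) = 1 + g1^2"
proof -
  have "e1$3 = g1 * e1$1 + g2 * e1$2" "e2$3 = g1 * e2$1 + g2 * e2$2"
    using assms(4,5) by (simp_all add: inner_real3 algebra_simps)
  then have o: "e1$1^2 + e1$2^2 + (g1 * e1$1 + g2 * e1$2)^2 = 1"
    "e2$1^2 + e2$2^2 + (g1 * e2$1 + g2 * e2$2)^2 = 1"
    "e1$1 * e2$1 + e1$2 * e2$2 + (g1 * e1$1 + g2 * e1$2) * (g1 * e2$1 + g2 * e2$2) = 0"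
    using assms(1-3) by (simp_all add: inner_real3 power2_eq_square)
  show "(e1$1 * e2$2 - e1$2 * e2$1)^2 * (1 + g1^2 + g2^2) = 1"
    using o by algebra
  show "(e1$1^2 + e2$1^2) * (1 + g1^2 + g2^2) = 1 + g2^2"
    using o by algebra
  show "(e1$2^2 + e2$2^2) * (1 + g1^2 + g2^2) = 1 + g1^2"
    using o by algebra
qed

lemma diagonal_form_det_eq_half_trace:
  fixes e1 e2 :: "real^3"
  assumes "e1 \<bullet> e1 = 1" "e2 \<bullet> e2 = 1" "e1 \<bullet> e2 = 0"
    and "e1 \<bullet> vector [- g1, - g2, 1] = 0" "e2 \<bullet> vector [- g1, - g2, 1] = 0"
    and AB: "2 * A * B = A * (1 + g2^2) + B * (1 + g1^2)"
  defines "H \<equiv> \<lambda>a b :: real^3. A * a$1 * b$1 + B * a$2 * b$2"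
  shows "2 * (H e1 e1 * H e2 e2 - H e1 e2 * H e2 e1) = H e1 e1 + H e2 e2"
proof -
  define W where "W = 1 + g1^2 + g2^2"
  note frame = orthonormal_tangent_frame_graph[OF assms(1-5), folded W_def]
  have "W > 0" unfolding W_def by (simp add: add_pos_nonneg)
  have "2 * (H e1 e1 * H e2 e2 - H e1 e2 * H e2 e1) * W = 2 * A * B * ((e1$1 * e2$2 - e1$2 * e2$1)^2 * W)"
    by (simp add: H_def power2_eq_square algebra_simps)
  also have "\<dots> = A * ((e1$1^2 + e2$1^2) * W) + B * ((e1$2^2 + e2$2^2) * W)"
    using frame AB by simp
  also have "\<dots> = (H e1 e1 + H e2 e2) * W"
    by (simp add: H_def power2_eq_square algebra_simps)
  finally show ?thesis using \<open>W > 0\<close> by simp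
qed

lemma has_derivative_tan_component:
  assumes "cos (a * x$i) \<noteq> 0"
  shows "((\<lambda>x::real^'n. tan (a * x$i)) has_derivative (\<lambda>v. a * (1 + (tan (a * x$i))^2) * v$i)) (at x)"
  using assms
  by (auto intro!: derivative_eq_intros DERIV_tan[THEN DERIV_compose_FDERIV] has_derivative_vec_nth
      simp: tan_sec fun_eq_iff power_inverse mult_ac)

lemma has_derivative_log_cos_graph:
  fixes q :: "real^2"
  assumes "c \<noteq> 0" "2*c - 1 \<noteq> 0" "cos (c * q$1) > 0" "cos (c * q$2 / (2*c - 1)) > 0"
  shows "((\<lambda>q. - (1/c) * ln (cos (c * q$1)) - ((2*c - 1)/c) * ln (cos (c * q$2 / (2*c - 1))))
    has_derivative (\<lambda>v. tan (c * q$1) * v$1 + tan (c * q$2 / (2*c - 1)) * v$2)) (at q)"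
  unfolding tan_def using assms
  apply (auto intro!: derivative_eq_intros has_derivative_vec_nth)
  by (simp add: fun_eq_iff divide_inverse algebra_simps)

theorem mainTheorem4:
  fixes c :: real and \<Omega> :: "(real^2) set" and u :: "real^2 \<Rightarrow> real"
  assumes "c \<noteq> 0" and "c \<noteq> 1/2"
    and "open \<Omega>" and "connected \<Omega>"
    and "\<forall>q\<in>\<Omega>. cos (c * q$1) > 0 \<and> cos (c * q$2 / (2*c - 1)) > 0"
    and "\<forall>q. u q = - (1/c) * ln (cos (c * q$1)) - ((2*c - 1)/c) * ln (cos (c * q$2 / (2*c - 1)))"
  shows "\<forall>q\<in>\<Omega>. \<forall>E1 E2.
           smooth_field_on \<Omega> E1 \<and> smooth_field_on \<Omega> E2 \<and>
           tangent_field_on u \<Omega> E1 \<and> tangent_field_on u \<Omega> E2 \<and>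
           E1 q \<bullet> E1 q = 1 \<and> E2 q \<bullet> E2 q = 1 \<and> E1 q \<bullet> E2 q = 0
           \<longrightarrow> ind_sec u E1 E2 q = snm_sec E1 E2 q"
proof (intro ballI allI impI, elim conjE)
  fix q E1 E2
  assume q: "q \<in> \<Omega>"
    and fields: "smooth_field_on \<Omega> E1" "smooth_field_on \<Omega> E2"
      "tangent_field_on u \<Omega> E1" "tangent_field_on u \<Omega> E2"
    and orthonormal: "E1 q \<bullet> E1 q = 1" "E2 q \<bullet> E2 q = 1" "E1 q \<bullet> E2 q = 0"
  \<comment> \<open>the identity is pointwise\<close>
  have k: "2*c - 1 \<noteq> 0" using assms(2) by auto
  define p where "p = (\<lambda>x::real^2. tan (c * x$1))"
  define r where "r = (\<lambda>x::real^2. tan (c * x$2 / (2*c - 1)))"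
  define A where "A = c * (1 + (p q)^2)"
  define B where "B = c / (2*c - 1) * (1 + (r q)^2)"
  have "u = (\<lambda>q. - (1/c) * ln (cos (c * q$1)) - ((2*c - 1)/c) * ln (cos (c * q$2 / (2*c - 1))))"
    using assms(6) by (simp add: fun_eq_iff)
  then have grad: "\<forall>x\<in>\<Omega>. (u has_derivative (\<lambda>v. p x * v$1 + r x * v$2)) (at x)"
    using has_derivative_log_cos_graph[OF assms(1) k] assms(5) by (simp add: p_def r_def)
  have cos_pos: "cos (c * q$1) > 0" "cos (c * q$2 / (2*c - 1)) > 0"
    using assms(5) q by auto
  have Dp: "(p has_derivative (\<lambda>v. A * v$1)) (at q)"
    using has_derivative_tan_component[of c q 1] cos_pos by (simp add: p_def A_def)
  have Dr: "(r has_derivative (\<lambda>v. B * v$2)) (at q)"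
    using has_derivative_tan_component[of "c / (2*c - 1)" q 2] cos_pos by (simp add: r_def B_def)
  have tangent: "E1 q \<bullet> vector [- p q, - r q, 1] = 0" "E2 q \<bullet> vector [- p q, - r q, 1] = 0"
    using tangent_field_on_graph[OF _ q grad[rule_format, OF q]] fields(3,4) by blast+
  have "2 * A * B = A * (1 + (r q)^2) + B * (1 + (p q)^2)"
    using k by (simp add: A_def B_def field_simps)
  from diagonal_form_det_eq_half_trace[OF orthonormal tangent this]
  show "ind_sec u E1 E2 q = snm_sec E1 E2 q"
    using ind_sec_graph[OF assms(3) q grad Dp Dr fields orthonormal] by (simp add: proj12_def)
qed

end
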